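(* Assume the setting below with general missingness: the $M_i(1),M_i(0)\in\{0,1\}$ are arbitrary constants whose values may depend on the potential outcomes in an arbitrary way. Fix $\boldsymbol\delta=(\delta_1,\dots,\delta_n)^\intercal\in\mathbb R^n$ and define $\boldsymbol Y^{\texttt{g}}_{\boldsymbol Z,\boldsymbol\delta}(0)\in\overline{\mathbb R}^n$ by $$Y^{\texttt{g}}_{\boldsymbol Z,\boldsymbol\delta,i}(0)=\begin{cases}Y_i-\delta_i,& Z_i=1,\ M_i=1,\\ -\infty,& Z_i=1,\ M_i=0,\\ Y_i,& Z_i=0,\ M_i=1,\\ +\infty,& Z_i=0,\ M_i=0,\end{cases}\qquad 1\le i\le n.$$ Then $p^{\texttt{g}}_{\boldsymbol Z,\boldsymbol\delta}:=G_{\mathrm R,\phi}\big(t_{\mathrm R,\phi}(\boldsymbol Z,\boldsymbol Y^{\texttt{g}}_{\boldsymbol Z,\boldsymbol\delta}(0))\big)$ is a valid p-value for the sharp null $H_{\boldsymbol\delta}:\boldsymbol\tau=\boldsymbol\delta$; that is, if $H_{\boldsymbol\delta}$ holds then $\mathbb P(p^{\texttt{g}}_{\boldsymbol Z,\boldsymbol\delta}\le\alpha)\le\alpha$ for every $\alpha\in(0,1)$.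
   Context: There are $n$ units. Unit $i$ has fixed potential outcomes $Y_i^\star(0),Y_i^\star(1)\in\mathbb R$ and fixed potential missingness indicators $M_i(0),M_i(1)\in\{0,1\}$; $\tau_i=Y_i^\star(1)-Y_i^\star(0)$ and $\boldsymbol\tau=(\tau_1,\dots,\tau_n)^\intercal$. The assignment $\boldsymbol Z=(Z_1,\dots,Z_n)^\intercal$ is drawn from a completely randomized experiment (CRE): for fixed positive integers $n_1,n_0$ with $n_1+n_0=n$, $\boldsymbol Z$ is uniform over the $\binom{n}{n_1}$ vectors in $\{0,1\}^n$ with exactly $n_1$ ones, independently of all potential outcomes and potential missingness indicators; probabilities are over $\boldsymbol Z$. The observed missingness indicator is $M_i=Z_iM_i(1)+(1-Z_i)M_i(0)$. The realized outcome $Z_iY_i^\star(1)+(1-Z_i)Y_i^\star(0)$ is observed, and denoted $Y_i$, only when $M_i=1$. Test statistics: let $\overline{\mathbb R}=\mathbb R\cup\{\pm\infty\}$. For $1\le i,j\le n$ and $y,y'\in\overline{\mathbb R}$ let $\psi_{i,j}(y,y')=\mathbf 1\{y>y'\}+\mathbf 1\{y=y'\}\mathbf 1\{i\ge j\}$, and for $\boldsymbol y\in\overline{\mathbb R}^n$ let $\mathrm{rank}_i(\boldsymbol y)=\sum_{j=1}^n\psi_{i,j}(y_i,y_j)$. Let $\phi$ be a fixed nondecreasing real function on the nonnegative integers. For $\boldsymbol z\in\{0,1\}^n$, $\boldsymbol y\in\overline{\mathbb R}^n$, $t_{\mathrm R,\phi}(\boldsymbol z,\boldsymbol y)$ denotes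 either the rank-sum statistic $\sum_{i=1}^n z_i\phi(\mathrm{rank}_i(\boldsymbol y))$ or the Mann–Whitney-type statistic $\sum_{i=1}^n z_i\phi\big(\sum_{j=1}^n(1-z_j)\psi_{i,j}(y_i,y_j)\big)$; the result holds for either choice. $G_{\mathrm R,\phi}(c)=\mathbb P(t_{\mathrm R,\phi}(\boldsymbol A,\boldsymbol y_0)\ge c)$, where $\boldsymbol A$ is drawn from the CRE and $\boldsymbol y_0\in\mathbb R^n$ is any fixed vector (this does not depend on $\boldsymbol y_0$). *)

theory Defs
  imports "HOL-Probability.Probability"
begin

(* Units are indexed by 0..<n. An assignment is z :: nat => bool (z i = True means
   treated), with z i = False for i >= n. *)

definition cre :: "nat \<Rightarrow> nat \<Rightarrow> (nat \<Rightarrow> bool) set" where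
  "cre n n1 = {z. (\<forall>i. n \<le> i \<longrightarrow> \<not> z i) \<and> card {i\<in>{0..<n}. z i} = n1}"

definition cre_prob :: "nat \<Rightarrow> nat \<Rightarrow> ((nat \<Rightarrow> bool) \<Rightarrow> bool) \<Rightarrow> real" where
  "cre_prob n n1 E = measure_pmf.prob (pmf_of_set (cre n n1)) {z. E z}"

definition psi :: "nat \<Rightarrow> nat \<Rightarrow> ereal \<Rightarrow> ereal \<Rightarrow> nat" where
  "psi i j y y' = (if y > y' then 1 else 0) + (if y = y' \<and> i \<ge> j then 1 else 0)"

definition rank :: "nat \<Rightarrow> (nat \<Rightarrow> ereal) \<Rightarrow> nat \<Rightarrow> nat" where
  "rank n y i = (\<Sum>j<n. psi i j (y i) (y j))"

datatype stat_kind = RankSum | MannWhitney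

definition t_stat :: "stat_kind \<Rightarrow> (nat \<Rightarrow> real) \<Rightarrow> nat \<Rightarrow> (nat \<Rightarrow> bool) \<Rightarrow> (nat \<Rightarrow> ereal) \<Rightarrow> real" where
  "t_stat k phi n z y = (case k of
      RankSum \<Rightarrow> (\<Sum>i<n. (if z i then 1 else 0) * phi (rank n y i))
    | MannWhitney \<Rightarrow> (\<Sum>i<n. (if z i then 1 else 0) *
          phi (\<Sum>j<n. (if z j then 0 else 1) * psi i j (y i) (y j))))"

definition G_stat :: "stat_kind \<Rightarrow> (nat \<Rightarrow> real) \<Rightarrow> nat \<Rightarrow> nat \<Rightarrow> (nat \<Rightarrow> real) \<Rightarrow> real \<Rightarrow> real" where
  "G_stat k phi n n1 y0 c = cre_prob n n1 (\<lambda>a. t_stat k phi n a (\<lambda>i. ereal (y0 i)) \<ge> c)"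

(* imputed control vector Y^g_{Z,delta}(0); M1 i / M0 i = True means outcome observed *)
definition Yg :: "(nat \<Rightarrow> real) \<Rightarrow> (nat \<Rightarrow> real) \<Rightarrow> (nat \<Rightarrow> bool) \<Rightarrow> (nat \<Rightarrow> bool)
                  \<Rightarrow> (nat \<Rightarrow> real) \<Rightarrow> (nat \<Rightarrow> bool) \<Rightarrow> nat \<Rightarrow> ereal" where
  "Yg Y1 Y0 M1 M0 \<delta> z i =
     (let M = (if z i then M1 i else M0 i);
          Y = (if z i then Y1 i else Y0 i)
      in if z i then (if M then ereal (Y - \<delta> i) else -\<infinity>)
         else (if M then ereal Y else \<infinity>))"

end

theory Submission
  imports Defs
begin

(*
  Under H_delta the imputed vector lies below the true control outcomes Y(0) on treated units
  and above them on control units, and both rank statistics can only decrease under such a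
  change, so t(Z, Y^g) <= t(Z, Y(0)) and, G being antitone, p^g >= G(t(Z, Y(0))).
  Both statistics depend on y only through the tie-broken rank vector, a permutation of 1..n,
  and the CRE is invariant under permutations of the units; hence t(A, Y(0)) has the same law
  as t(A, y0), so G(t(Z, Y(0))) is the randomization p-value P_A(T(A) >= T(Z)) of the fixed
  statistic T = t(-, Y(0)), which is valid: the event {p <= alpha} lies inside {T >= T(z0)}
  for its T-minimal point z0, an event of probability p(z0) <= alpha.
*)

definition lex_le :: "ereal \<Rightarrow> nat \<Rightarrow> ereal \<Rightarrow> nat \<Rightarrow> bool" where
  "lex_le a i b j \<longleftrightarrow> a < b \<or> (a = b \<and> i \<le> j)"

lemma lex_le_refl: "lex_le a i a i"
  by (simp add: lex_le_def)

lemma lex_le_trans: "lex_le a i b j \<Longrightarrow> lex_le b j c l \<Longrightarrow> lex_le a i c l"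
  unfolding lex_le_def by auto

lemma lex_le_linear: "lex_le a i b j \<or> lex_le b j a i"
  unfolding lex_le_def by auto

lemma lex_le_antisym: "lex_le a i b j \<Longrightarrow> lex_le b j a i \<Longrightarrow> i = j"
  unfolding lex_le_def by auto

lemma lex_le_mono: "a' \<le> a \<Longrightarrow> b \<le> b' \<Longrightarrow> lex_le a i b j \<Longrightarrow> lex_le a' i b' j"
  unfolding lex_le_def by (metis le_less less_le_trans order_le_less_trans)

lemma psi_eq_lex_le: "psi i j a b = (if lex_le b j a i then 1 else 0)"
  unfolding psi_def lex_le_def by auto

lemma rank_eq_card: "rank n y i = card {j\<in>{..<n}. lex_le (y j) j (y i) i}"
  unfolding rank_def psi_eq_lex_le by (simp add: sum.If_cases Int_def conj_commute)

lemma rank_mono: "lex_le (y j) j (y i) i \<Longrightarrow> rank n y j \<le> rank n y i"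
  unfolding rank_eq_card by (rule card_mono) (auto intro: lex_le_trans)

lemma rank_strict_mono:
  assumes "j < n" and "\<not> lex_le (y j) j (y i) i"
  shows "rank n y i < rank n y j"
  unfolding rank_eq_card
proof (rule psubset_card_mono)
  show "{l\<in>{..<n}. lex_le (y l) l (y i) i} \<subset> {l\<in>{..<n}. lex_le (y l) l (y j) j}"
    using assms lex_le_linear[of "y i" i "y j" j] by (auto intro: lex_le_trans lex_le_refl)
qed simp

lemma rank_le_iff: "j < n \<Longrightarrow> rank n y j \<le> rank n y i \<longleftrightarrow> lex_le (y j) j (y i) i"
  using rank_mono rank_strict_mono by (metis not_le)

lemma inj_on_rank: "inj_on (rank n y) {..<n}"
  by (rule inj_onI) (metis lessThan_iff order_refl rank_le_iff lex_le_antisym)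

lemma rank_in_atLeastAtMost: "i < n \<Longrightarrow> rank n y i \<in> {1..n}"
proof -
  assume "i < n"
  then have "i \<in> {j\<in>{..<n}. lex_le (y j) j (y i) i}"
    by (simp add: lex_le_refl)
  then have "0 < rank n y i"
    unfolding rank_eq_card by (intro card_gt_0_iff[THEN iffD2]) auto
  moreover have "rank n y i \<le> card {..<n}"
    unfolding rank_eq_card by (rule card_mono) auto
  ultimately show ?thesis by simp
qed

lemma bij_betw_rank: "bij_betw (rank n y) {..<n} {1..n}"
proof -
  have "rank n y ` {..<n} \<subseteq> {1..n}"
    using rank_in_atLeastAtMost by auto
  moreover have "card (rank n y ` {..<n}) = card {1..n}"
    using card_image[OF inj_on_rank] by simp
  ultimately show ?thesis
    using inj_on_rank by (simp add: bij_betw_def card_subset_eq)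
qed

lemma card_rank_gt: "card {i\<in>{..<n}. s < rank n y i} = n - s"
proof -
  have "rank n y ` {i\<in>{..<n}. s < rank n y i} = {r\<in>rank n y ` {..<n}. s < r}"
    by auto
  also have "\<dots> = {Suc s..n}"
    using bij_betw_rank[of n y] by (auto simp: bij_betw_def)
  finally have "card (rank n y ` {i\<in>{..<n}. s < rank n y i}) = n - s"
    by simp
  moreover have "inj_on (rank n y) {i\<in>{..<n}. s < rank n y i}"
    by (rule inj_on_subset[OF inj_on_rank]) auto
  ultimately show ?thesis
    by (simp add: card_image)
qed

definition rank_stat ::
    "stat_kind \<Rightarrow> (nat \<Rightarrow> real) \<Rightarrow> nat \<Rightarrow> (nat \<Rightarrow> bool) \<Rightarrow> (nat \<Rightarrow> nat) \<Rightarrow> real" where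
  "rank_stat k phi n z r = (case k of
      RankSum \<Rightarrow> (\<Sum>i<n. (if z i then 1 else 0) * phi (r i))
    | MannWhitney \<Rightarrow> (\<Sum>i<n. (if z i then 1 else 0) *
          phi (\<Sum>j<n. (if z j then 0 else 1) * (if r j \<le> r i then 1 else 0))))"

lemma t_stat_eq_rank_stat: "t_stat k phi n z y = rank_stat k phi n z (rank n y)"
  by (cases k) (auto simp: t_stat_def rank_stat_def psi_eq_lex_le rank_le_iff
      intro!: sum.cong arg_cong[where f = phi])

lemma rank_stat_cong:
  "(\<And>i. i < n \<Longrightarrow> r i = r' i) \<Longrightarrow> rank_stat k phi n z r = rank_stat k phi n z r'"
  unfolding rank_stat_def by (cases k) (auto intro!: sum.cong)

lemma rank_stat_permute:
  assumes "p permutes {..<n}"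
  shows "rank_stat k phi n (z \<circ> p) (r \<circ> p) = rank_stat k phi n z r"
proof -
  have reindex: "(\<Sum>i<n. f (p i)) = (\<Sum>i<n. f i)" for f :: "nat \<Rightarrow> 'b::comm_monoid_add"
    using sum.permute[OF assms, of f] by (simp add: comp_def)
  have "(\<Sum>j<n. (if z (p j) then 0 else 1) * (if r (p j) \<le> c then 1 else 0))
      = (\<Sum>j<n. (if z j then 0 else 1) * (if r j \<le> c then 1 else 0 :: nat))" for c
    by (rule reindex)
  then show ?thesis
    unfolding rank_stat_def
    by (cases k) (simp_all add: reindex[of "\<lambda>i. (if z i then 1 else 0) * phi (r i)"]
        reindex[of "\<lambda>i. (if z i then 1 else 0) *
          phi (\<Sum>j<n. (if z j then 0 else 1) * (if r j \<le> r i then 1 else 0))"])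
qed

lemma finite_cre: "finite (cre n n1)"
proof (rule finite_subset)
  show "cre n n1 \<subseteq> (\<lambda>A i. i \<in> A) ` Pow {..<n}"
  proof
    fix z assume "z \<in> cre n n1"
    then have "z = (\<lambda>i. i \<in> {i. i < n \<and> z i})"
      by (auto simp: cre_def fun_eq_iff) (meson not_le)
    then show "z \<in> (\<lambda>A i. i \<in> A) ` Pow {..<n}"
      by blast
  qed
qed simp

lemma cre_nonempty: "n1 \<le> n \<Longrightarrow> cre n n1 \<noteq> {}"
proof -
  assume "n1 \<le> n"
  then have "{i\<in>{0..<n}. i < n1} = {0..<n1}"
    by auto
  then have "(\<lambda>i. i < n1) \<in> cre n n1"
    using \<open>n1 \<le> n\<close> by (simp add: cre_def)
  then show ?thesis
    by blast
qed

lemma comp_permutes_in_cre: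
  assumes "p permutes {..<n}" and "z \<in> cre n n1"
  shows "z \<circ> p \<in> cre n n1"
proof -
  have "p ` {i\<in>{..<n}. z (p i)} = {j\<in>{..<n}. z j}"
    using permutes_image[OF assms(1)] by auto
  then have "card {i\<in>{..<n}. z (p i)} = card {j\<in>{..<n}. z j}"
    by (metis card_image permutes_inj_on[OF assms(1)])
  moreover have "\<not> z (p i)" if "n \<le> i" for i
    using assms that by (simp add: cre_def permutes_not_in)
  ultimately show ?thesis
    using assms(2) by (simp add: cre_def atLeast0LessThan)
qed

lemma bij_betw_comp_permutes_cre:
  assumes "p permutes {..<n}"
  shows "bij_betw (\<lambda>z. z \<circ> p) (cre n n1) (cre n n1)"
proof (rule bij_betw_byWitness[where f' = "\<lambda>z. z \<circ> inv p"])
  show "\<forall>z\<in>cre n n1. z \<circ> p \<circ> inv p = z" "\<forall>z\<in>cre n n1. z \<circ> inv p \<circ> p = z"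
    by (simp_all add: comp_assoc permutes_inv_o[OF assms])
  show "(\<lambda>z. z \<circ> p) ` cre n n1 \<subseteq> cre n n1" "(\<lambda>z. z \<circ> inv p) ` cre n n1 \<subseteq> cre n n1"
    using comp_permutes_in_cre[OF assms] comp_permutes_in_cre[OF permutes_inv[OF assms]]
    by auto
qed

lemma map_pmf_cre_permute:
  assumes "n1 \<le> n" and "p permutes {..<n}"
  shows "map_pmf (\<lambda>z. z \<circ> p) (pmf_of_set (cre n n1)) = pmf_of_set (cre n n1)"
  using bij_betw_comp_permutes_cre[OF assms(2)] cre_nonempty[OF assms(1)] finite_cre
  by (rule map_pmf_of_set_bij_betw)

lemma ex_permutes_rank_eq: "\<exists>p. p permutes {..<n} \<and> (\<forall>i<n. rank n y' (p i) = rank n y i)"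
proof -
  define q where "q = inv_into {..<n} (rank n y') \<circ> rank n y"
  have "bij_betw q {..<n} {..<n}"
    unfolding q_def by (rule bij_betw_trans[OF bij_betw_rank bij_betw_inv_into[OF bij_betw_rank]])
  then have "bij_betw (\<lambda>i. if i < n then q i else i) {..<n} {..<n}"
    by (rule bij_betw_cong[THEN iffD1, rotated]) simp
  then have "(\<lambda>i. if i < n then q i else i) permutes {..<n}"
    by (rule bij_imp_permutes) simp
  moreover have "rank n y' (q i) = rank n y i" if "i < n" for i
    using bij_betw_inv_into_right[OF bij_betw_rank rank_in_atLeastAtMost[OF that]]
    by (simp add: q_def)
  ultimately show ?thesis
    by (intro exI[of _ "\<lambda>i. if i < n then q i else i"]) simp
qed

lemma map_pmf_t_stat_cre_indep:
  assumes "n1 \<le> n"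
  shows "map_pmf (\<lambda>z. t_stat k phi n z y) (pmf_of_set (cre n n1))
       = map_pmf (\<lambda>z. t_stat k phi n z y') (pmf_of_set (cre n n1))"
proof -
  obtain p where p: "p permutes {..<n}" and rank_p: "\<forall>i<n. rank n y' (p i) = rank n y i"
    using ex_permutes_rank_eq by blast
  have "t_stat k phi n (z \<circ> p) y = t_stat k phi n z y'" for z
  proof -
    have "t_stat k phi n (z \<circ> p) y = rank_stat k phi n (z \<circ> p) (rank n y' \<circ> p)"
      unfolding t_stat_eq_rank_stat by (rule rank_stat_cong) (simp add: rank_p)
    then show ?thesis
      by (simp add: rank_stat_permute[OF p] t_stat_eq_rank_stat)
  qed
  then have "map_pmf (\<lambda>z. t_stat k phi n z y') (pmf_of_set (cre n n1))
      = map_pmf (\<lambda>z. t_stat k phi n z y) (map_pmf (\<lambda>z. z \<circ> p) (pmf_of_set (cre n n1)))"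
    by (simp add: map_pmf_comp)
  then show ?thesis
    by (simp add: map_pmf_cre_permute[OF assms p])
qed

lemma G_stat_eq_prob:
  assumes "n1 \<le> n"
  shows "G_stat k phi n n1 y0 c
       = measure_pmf.prob (pmf_of_set (cre n n1)) {a. c \<le> t_stat k phi n a y}"
proof -
  have "G_stat k phi n n1 y0 c
      = measure_pmf.prob (map_pmf (\<lambda>a. t_stat k phi n a (\<lambda>i. ereal (y0 i))) (pmf_of_set (cre n n1)))
          {x. c \<le> x}"
    by (simp add: G_stat_def cre_prob_def)
  then show ?thesis
    unfolding map_pmf_t_stat_cre_indep[OF assms, of k phi "\<lambda>i. ereal (y0 i)" y] by simp
qed

lemma sum_layer_cake:
  fixes f :: "nat \<Rightarrow> 'a::ring_1"
  assumes "finite T" and "\<forall>i\<in>T. r i \<le> n"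
  shows "(\<Sum>i\<in>T. f (r i))
       = of_nat (card T) * f 0 + (\<Sum>s<n. of_nat (card {i\<in>T. s < r i}) * (f (Suc s) - f s))"
proof -
  have "f (r i) = f 0 + (\<Sum>s<n. if s < r i then f (Suc s) - f s else 0)" if "i \<in> T" for i
  proof -
    have "{..<n} \<inter> {s. s < r i} = {..<r i}"
      using assms(2) that by auto
    then show ?thesis
      using sum_lessThan_telescope[of f "r i"]
        sum.inter_restrict[of "{..<n}" "\<lambda>s. f (Suc s) - f s" "{s. s < r i}"]
      by (simp add: diff_eq_eq add.commute)
  qed
  then have "(\<Sum>i\<in>T. f (r i)) = (\<Sum>i\<in>T. f 0 + (\<Sum>s<n. if s < r i then f (Suc s) - f s else 0))"
    by (rule sum.cong[OF refl])
  also have "\<dots> = of_nat (card T) * f 0 + (\<Sum>s<n. \<Sum>i\<in>T. if s < r i then f (Suc s) - f s else 0)"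
    by (simp add: sum.distrib sum.swap[of _ T])
  also have "\<dots> = of_nat (card T) * f 0 + (\<Sum>s<n. of_nat (card {i\<in>T. s < r i}) * (f (Suc s) - f s))"
    using assms(1) by (simp add: sum.If_cases Int_def)
  finally show ?thesis .
qed

(* Exactly n - s units have rank above s under either ranking. If a treated unit t crosses the
   threshold s upwards, every control unit above s under y stays above t under y', so the number
   of control units above s cannot drop, and hence that of treated units cannot grow. *)
lemma card_treated_rank_gt_mono:
  assumes treated: "\<forall>i<n. z i \<longrightarrow> y' i \<le> y i"
    and control: "\<forall>i<n. \<not> z i \<longrightarrow> y i \<le> y' i"
  shows "card {i\<in>{..<n}. z i \<and> s < rank n y' i} \<le> card {i\<in>{..<n}. z i \<and> s < rank n y i}"
proof (cases "\<exists>t<n. z t \<and> s < rank n y' t \<and> rank n y t \<le> s")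
  case False
  then show ?thesis
    by (intro card_mono) auto
next
  case True
  then obtain t where t: "t < n" "z t" "s < rank n y' t" "rank n y t \<le> s"
    by blast
  have split: "card {i\<in>{..<n}. z i \<and> s < rank n w i}
      + card {i\<in>{..<n}. \<not> z i \<and> s < rank n w i} = n - s" for w
  proof -
    have "{i\<in>{..<n}. s < rank n w i}
        = {i\<in>{..<n}. z i \<and> s < rank n w i} \<union> {i\<in>{..<n}. \<not> z i \<and> s < rank n w i}"
      by auto
    then show ?thesis
      using card_rank_gt[of n s w] by (simp add: card_Un_disjoint disjoint_iff)
  qed
  have "{i\<in>{..<n}. \<not> z i \<and> s < rank n y i} \<subseteq> {i\<in>{..<n}. \<not> z i \<and> s < rank n y' i}"
  proof
    fix c assume c: "c \<in> {i\<in>{..<n}. \<not> z i \<and> s < rank n y i}"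
    then have "\<not> lex_le (y c) c (y t) t"
      using t rank_mono[of y c t n] by auto
    then have "lex_le (y t) t (y c) c"
      using lex_le_linear by blast
    then have "lex_le (y' t) t (y' c) c"
      using lex_le_mono[of "y' t" "y t" "y c" "y' c" t c] treated control t c by auto
    then show "c \<in> {i\<in>{..<n}. \<not> z i \<and> s < rank n y' i}"
      using c t rank_mono[of y' t c n] by auto
  qed
  then have "card {i\<in>{..<n}. \<not> z i \<and> s < rank n y i}
      \<le> card {i\<in>{..<n}. \<not> z i \<and> s < rank n y' i}"
    by (intro card_mono) auto
  then show ?thesis
    using split[of y] split[of y'] by linarith
qed

lemma t_stat_mono:
  assumes "mono phi"
    and treated: "\<forall>i<n. z i \<longrightarrow> y' i \<le> y i" and control: "\<forall>i<n. \<not> z i \<longrightarrow> y i \<le> y' i"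
  shows "t_stat k phi n z y' \<le> t_stat k phi n z y"
proof (cases k)
  case MannWhitney
  have "psi i j (y' i) (y' j) \<le> psi i j (y i) (y j)" if "i < n" "j < n" "z i" "\<not> z j" for i j
    using lex_le_mono[of "y j" "y' j" "y' i" "y i" j i] treated control that
    by (simp add: psi_eq_lex_le)
  then show ?thesis
    unfolding t_stat_def MannWhitney
    by (auto intro!: sum_mono monoD[OF assms(1)])
next
  case RankSum
  let ?T = "{i\<in>{..<n}. z i}"
  have layer_cake: "t_stat k phi n z w = of_nat (card ?T) * phi 0
      + (\<Sum>s<n. of_nat (card {i\<in>{..<n}. z i \<and> s < rank n w i}) * (phi (Suc s) - phi s))" for w
  proof -
    have "t_stat k phi n z w = (\<Sum>i<n. if z i then phi (rank n w i) else 0)"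
      unfolding t_stat_def RankSum by (auto intro!: sum.cong)
    also have "\<dots> = (\<Sum>i\<in>?T. phi (rank n w i))"
      by (rule sum.inter_filter[symmetric]) simp
    also have "\<dots> = of_nat (card ?T) * phi 0
        + (\<Sum>s<n. of_nat (card {i\<in>?T. s < rank n w i}) * (phi (Suc s) - phi s))"
      by (rule sum_layer_cake) (use rank_in_atLeastAtMost in auto)
    finally show ?thesis
      by simp
  qed
  have "phi s \<le> phi (Suc s)" for s
    using assms(1) by (simp add: monoD)
  then show ?thesis
    unfolding layer_cake
    using card_treated_rank_gt_mono[OF treated control] by (auto intro!: sum_mono mult_right_mono)
qed

lemma t_stat_Yg_le:
  assumes "mono phi" and "\<forall>i<n. Y1 i - Y0 i = \<delta> i"
  shows "t_stat k phi n z (Yg Y1 Y0 M1 M0 \<delta> z) \<le> t_stat k phi n z (\<lambda>i. ereal (Y0 i))"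
  by (rule t_stat_mono[OF assms(1)]) (use assms(2) in \<open>auto simp: Yg_def Let_def\<close>)

lemma prob_pvalue_le:
  fixes T :: "'a \<Rightarrow> 'b::linorder"
  assumes "finite (set_pmf P)" and "0 \<le> \<alpha>"
  shows "measure_pmf.prob P {z. measure_pmf.prob P {a. T z \<le> T a} \<le> \<alpha>} \<le> \<alpha>"
proof -
  let ?E = "{z\<in>set_pmf P. measure_pmf.prob P {a. T z \<le> T a} \<le> \<alpha>}"
  have "measure_pmf.prob P {z. measure_pmf.prob P {a. T z \<le> T a} \<le> \<alpha>} = measure_pmf.prob P ?E"
    using measure_Int_set_pmf[of P "{z. measure_pmf.prob P {a. T z \<le> T a} \<le> \<alpha>}"]
    by (simp add: Int_def conj_commute)
  also have "\<dots> \<le> \<alpha>"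
  proof (cases "?E = {}")
    case True
    show ?thesis
      unfolding True using assms(2) by simp
  next
    case False
    have "finite (T ` ?E)"
      using assms(1) by simp
    moreover have "Min (T ` ?E) \<in> T ` ?E"
      using False \<open>finite (T ` ?E)\<close> by (intro Min_in) auto
    then obtain z0 where z0: "z0 \<in> ?E" and "T z0 = Min (T ` ?E)"
      by auto
    ultimately have "?E \<subseteq> {a. T z0 \<le> T a}"
      by auto
    then have "measure_pmf.prob P ?E \<le> measure_pmf.prob P {a. T z0 \<le> T a}"
      by (rule measure_pmf.finite_measure_mono) simp
    also have "\<dots> \<le> \<alpha>"
      using z0 by simp
    finally show ?thesis .
  qed
  finally show ?thesis .
qed

theorem theorem1:
  fixes n n1 n0 :: nat
    and Y1 Y0 \<delta> y0 :: "nat \<Rightarrow> real"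
    and M1 M0 :: "nat \<Rightarrow> bool"
    and phi :: "nat \<Rightarrow> real"
    and k :: stat_kind
  assumes "0 < n1" and "0 < n0" and "n1 + n0 = n"
    and "mono phi"
    and "\<forall>i<n. Y1 i - Y0 i = \<delta> i"
    and "0 < \<alpha>" and "\<alpha> < 1"
  shows "cre_prob n n1 (\<lambda>z. G_stat k phi n n1 y0
            (t_stat k phi n z (Yg Y1 Y0 M1 M0 \<delta> z)) \<le> \<alpha>) \<le> \<alpha>"
proof -
  have "n1 \<le> n"
    using assms(3) by simp
  let ?P = "pmf_of_set (cre n n1)"
  let ?T = "\<lambda>z. t_stat k phi n z (\<lambda>i. ereal (Y0 i))"
  let ?pvalue = "\<lambda>z. measure_pmf.prob ?P {a. ?T z \<le> ?T a}"
  have pvalue_le: "?pvalue z \<le> G_stat k phi n n1 y0 (t_stat k phi n z (Yg Y1 Y0 M1 M0 \<delta> z))" for z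
    unfolding G_stat_eq_prob[OF \<open>n1 \<le> n\<close>, where y = "\<lambda>i. ereal (Y0 i)"]
    using t_stat_Yg_le[OF assms(4,5), of k z M1 M0]
    by (intro measure_pmf.finite_measure_mono) auto
  have "cre_prob n n1 (\<lambda>z. G_stat k phi n n1 y0 (t_stat k phi n z (Yg Y1 Y0 M1 M0 \<delta> z)) \<le> \<alpha>)
      \<le> measure_pmf.prob ?P {z. ?pvalue z \<le> \<alpha>}"
    unfolding cre_prob_def
    by (intro measure_pmf.finite_measure_mono) (auto intro: order_trans[OF pvalue_le])
  also have "\<dots> \<le> \<alpha>"
    using prob_pvalue_le[of ?P \<alpha> ?T] assms(6) cre_nonempty[OF \<open>n1 \<le> n\<close>] finite_cre by simp
  finally show ?thesis .
qed

end
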